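(* Assume $\hat\omega$ lies in the interior of $\mathbb{P}_\Omega$ (all $\hat\omega_i>0$). The vertex-direction iteration with step sizes $\alpha_n=1/(n+1)$, initialized at any $\omega^{(1)}\in\mathbb{P}_\Omega$, satisfies $$\|\omega^{(n)}-\hat\omega\|_{\mathbf K}^2\le 4R_*^2\Big(1+\frac{R_*^2}{\alpha_*^2}\Big)\frac1{n^2},\qquad n\ge1,$$ where $R_*=[\lambda_{\max}(\mathbf K)(1-1/\Omega)]^{1/2}$, $\alpha_*=w_*/L$, $w_*=\min_i\hat\omega_i$ and $L=(\max_i\{\mathbf K^{-1}\}_{ii})^{1/2}$.
   Context: $\mathbf K$ is a real symmetric positive definite $\Omega\times\Omega$ matrix ($\Omega\ge2$) with largest eigenvalue $\lambda_{\max}(\mathbf K)$; $\|u\|_{\mathbf K}^2=u^T\mathbf K u$. $e_i$ is the $i$-th canonical basis vector of $\mathbb{R}^\Omega$ and $\mathbb{P}_\Omega=\{\omega\in\mathbb{R}^\Omega:\omega_i\ge0,\sum_i\omega_i=1\}$. The vertex-direction iteration is $\omega^{(n+1)}=\omega^{(n)}+\alpha_n(e_{i_n^+}-\omega^{(n)})$ with $i_n^+\in\arg\min_{i=1,\dots,\Omega}e_i^T\mathbf K(\omega^{(n)}-\hat\omega)$. *)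

theory Defs
  imports "HOL-Analysis.Analysis"
begin

definition matrix_eigenvalues :: "real^'n^'n \<Rightarrow> real set" where
  "matrix_eigenvalues K = {l. \<exists>v. v \<noteq> 0 \<and> K *v v = l *\<^sub>R v}"

definition lambda_max :: "real^'n^'n \<Rightarrow> real" where
  "lambda_max K = Max (matrix_eigenvalues K)"

definition simplex_P :: "(real^'n) set" where
  "simplex_P = {w. (\<forall>i. w $ i \<ge> 0) \<and> sum (\<lambda>i. w $ i) UNIV = 1}"

definition Knorm2 :: "real^'n^'n \<Rightarrow> real^'n \<Rightarrow> real" where
  "Knorm2 K u = u \<bullet> (K *v u)"

end

theory Submission
  imports Defs
begin

text \<open>Put \<open>D\<^sub>n = n (\<omega>\<^sub>n - \<omega>\<^sup>*)\<close>. With step size \<open>1/(n+1)\<close> the iteration becomes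
  \<open>D\<^sub>n\<^sub>+\<^sub>1 = D\<^sub>n + (e\<^sub>i - \<omega>\<^sup>*)\<close>, where \<open>e\<^sub>i\<close> minimises the gradient \<open>K D\<^sub>n\<close> over the vertices.
  As \<open>\<omega>\<^sup>*\<close> is interior and the coordinates of \<open>D\<^sub>n\<close> sum to zero, the cross term satisfies
  \<open>(e\<^sub>i - \<omega>\<^sup>*) \<bullet> K D\<^sub>n \<le> -\<alpha>\<^sub>* \<parallel>D\<^sub>n\<parallel>\<^sub>K\<close>, hence \<open>E\<^sub>n = \<parallel>D\<^sub>n\<parallel>\<^sub>K\<^sup>2\<close> obeys
  \<open>E\<^sub>n\<^sub>+\<^sub>1 \<le> E\<^sub>n - 2 \<alpha>\<^sub>* sqrt E\<^sub>n + 2 \<lambda>\<^sub>m\<^sub>a\<^sub>x\<close>. This keeps \<open>E\<^sub>n\<close> below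
  \<open>2 \<lambda>\<^sub>m\<^sub>a\<^sub>x + (\<lambda>\<^sub>m\<^sub>a\<^sub>x / \<alpha>\<^sub>*)\<^sup>2\<close>, which is at most \<open>4 R\<^sub>*\<^sup>2 (1 + R\<^sub>*\<^sup>2 / \<alpha>\<^sub>*\<^sup>2)\<close> because
  \<open>\<Omega> \<ge> 2\<close>.\<close>

section \<open>Quadratic forms of symmetric matrices\<close>

lemma inner_matrix_vector_symmetric:
  fixes K :: "real^'n^'n"
  assumes "transpose K = K"
  shows "x \<bullet> (K *v y) = y \<bullet> (K *v x)"
proof -
  have "x \<bullet> (K *v y) = (x v* K) \<bullet> y" by (simp add: dot_lmul_matrix)
  also have "x v* K = transpose K *v x" by simp
  finally show ?thesis using assms by (simp add: inner_commute)
qed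

lemma quadform_add:
  fixes K :: "real^'n^'n"
  assumes "transpose K = K"
  shows "(x + y) \<bullet> (K *v (x + y)) = x \<bullet> (K *v x) + 2 * (y \<bullet> (K *v x)) + y \<bullet> (K *v y)"
  using inner_matrix_vector_symmetric[OF assms, of x y]
  by (simp add: matrix_vector_right_distrib inner_add_left inner_add_right)

lemma quadform_scaleR:
  fixes K :: "real^'n^'n"
  shows "(c *\<^sub>R x) \<bullet> (K *v (c *\<^sub>R x)) = c\<^sup>2 * (x \<bullet> (K *v x))"
  by (simp add: matrix_vector_mult_scaleR power2_eq_square)

lemma Knorm2_scaleR:
  fixes K :: "real^'n^'n"
  shows "Knorm2 K (c *\<^sub>R x) = c\<^sup>2 * Knorm2 K x"
  unfolding Knorm2_def by (rule quadform_scaleR)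

lemma nonneg_quadratic_discriminant:
  fixes a b c :: real
  assumes nonneg: "\<And>t. 0 \<le> a + 2 * b * t + c * t\<^sup>2" and "0 \<le> c"
  shows "b\<^sup>2 \<le> a * c"
proof (cases "c = 0")
  case True
  have "b = 0"
  proof (rule ccontr)
    assume "b \<noteq> 0"
    then have "a + 2 * b * (- (a + 1) / (2 * b)) + c * (- (a + 1) / (2 * b))\<^sup>2 = -1"
      using True by (simp add: field_simps)
    with nonneg show False by (metis neg_0_le_iff_le not_one_le_zero)
  qed
  then show ?thesis using True by simp
next
  case False
  with \<open>0 \<le> c\<close> have "0 < c" by simp
  have "0 \<le> a + 2 * b * (- b / c) + c * (- b / c)\<^sup>2" by (rule nonneg)
  also have "\<dots> = (a * c - b\<^sup>2) / c" using \<open>0 < c\<close> by (simp add: field_simps power2_eq_square)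
  finally show ?thesis using \<open>0 < c\<close> by (simp add: zero_le_divide_iff)
qed

lemma posdef_imp_psd:
  fixes K :: "real^'n^'n"
  assumes "\<forall>x. x \<noteq> 0 \<longrightarrow> x \<bullet> (K *v x) > 0"
  shows "0 \<le> x \<bullet> (K *v x)"
  using assms by (cases "x = 0") (auto intro: less_imp_le)

lemma quadform_Cauchy_Schwarz:
  fixes K :: "real^'n^'n"
  assumes sym: "transpose K = K" and psd: "\<And>z. 0 \<le> z \<bullet> (K *v z)"
  shows "(x \<bullet> (K *v y))\<^sup>2 \<le> (x \<bullet> (K *v x)) * (y \<bullet> (K *v y))"
proof (rule nonneg_quadratic_discriminant)
  fix t
  have "0 \<le> (x + t *\<^sub>R y) \<bullet> (K *v (x + t *\<^sub>R y))" by (rule psd)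
  also have "\<dots> = x \<bullet> (K *v x) + 2 * (x \<bullet> (K *v y)) * t + (y \<bullet> (K *v y)) * t\<^sup>2"
    using inner_matrix_vector_symmetric[OF sym, of x y]
    by (simp add: quadform_add[OF sym] quadform_scaleR matrix_vector_mult_scaleR
        algebra_simps power2_eq_square)
  finally show "0 \<le> x \<bullet> (K *v x) + 2 * (x \<bullet> (K *v y)) * t + (y \<bullet> (K *v y)) * t\<^sup>2" .
qed (rule psd)

lemma quadform_eq_0_imp_kernel:
  fixes K :: "real^'n^'n"
  assumes sym: "transpose K = K" and psd: "\<And>z. 0 \<le> z \<bullet> (K *v z)"
    and "u \<bullet> (K *v u) = 0"
  shows "K *v u = 0"
proof -
  have "((K *v u) \<bullet> (K *v u))\<^sup>2 \<le> ((K *v u) \<bullet> (K *v (K *v u))) * (u \<bullet> (K *v u))"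
    by (rule quadform_Cauchy_Schwarz[OF sym psd])
  then show ?thesis using assms(3) by simp
qed

section \<open>The largest eigenvalue\<close>

lemma matrix_eigenvalues_finite:
  fixes K :: "real^'n^'n"
  assumes sym: "transpose K = K"
  shows "finite (matrix_eigenvalues K)"
proof -
  define E where "E = matrix_eigenvalues K"
  define v where "v l = (SOME v. v \<noteq> 0 \<and> K *v v = l *\<^sub>R v)" for l
  have v: "v l \<noteq> 0 \<and> K *v v l = l *\<^sub>R v l" if "l \<in> E" for l
  proof -
    have "\<exists>w. w \<noteq> 0 \<and> K *v w = l *\<^sub>R w" using that by (simp add: E_def matrix_eigenvalues_def)
    then show ?thesis unfolding v_def by (rule someI_ex)
  qed
  have inj: "inj_on v E"
  proof (rule inj_onI)
    fix l l' assume "l \<in> E" "l' \<in> E" "v l = v l'"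
    then have "l *\<^sub>R v l = l' *\<^sub>R v l" "v l \<noteq> 0" using v by metis+
    then show "l = l'" by (metis scaleR_cancel_right)
  qed
  have "pairwise orthogonal (v ` E)"
  proof (clarsimp simp: pairwise_def)
    fix l l' assume l: "l \<in> E" "l' \<in> E" "v l \<noteq> v l'"
    have "l * (v l \<bullet> v l') = v l' \<bullet> (K *v v l)" using v[OF l(1)] by (simp add: inner_commute)
    also have "\<dots> = v l \<bullet> (K *v v l')" by (rule inner_matrix_vector_symmetric[OF sym])
    also have "\<dots> = l' * (v l \<bullet> v l')" using v[OF l(2)] by simp
    finally show "orthogonal (v l) (v l')" using l by (auto simp: orthogonal_def)
  qed
  moreover have "0 \<notin> v ` E" using v by auto
  ultimately have "finite (v ` E)"
    using pairwise_orthogonal_independent independent_bound by blast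
  then show ?thesis using inj finite_imageD E_def by blast
qed

text \<open>The maximum of the quadratic form on the unit sphere is an eigenvalue: at a maximiser
  \<open>u\<close> the positive semidefinite matrix \<open>mat \<mu> - K\<close> has a vanishing quadratic form, so
  \<open>u\<close> lies in its kernel.\<close>

lemma quadform_le_eigenvalue:
  fixes K :: "real^'n^'n"
  assumes sym: "transpose K = K"
  shows "\<exists>\<mu>\<in>matrix_eigenvalues K. \<forall>x. x \<bullet> (K *v x) \<le> \<mu> * (x \<bullet> x)"
proof -
  define f where "f x = x \<bullet> (K *v x)" for x :: "real^'n"
  have "continuous_on (sphere 0 1) f"
    unfolding f_def by (intro continuous_intros)
  moreover have "sphere (0::real^'n) 1 \<noteq> {}" by simp
  ultimately obtain u where u: "u \<in> sphere 0 1" and umax: "\<And>x. x \<in> sphere 0 1 \<Longrightarrow> f x \<le> f u"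
    using continuous_attains_sup[OF compact_sphere] by blast
  define \<mu> where "\<mu> = f u"
  have bound: "f x \<le> \<mu> * (x \<bullet> x)" for x
  proof (cases "x = 0")
    case False
    have "f ((1 / norm x) *\<^sub>R x) \<le> \<mu>" using False umax by (simp add: \<mu>_def)
    then have "f x / (norm x)\<^sup>2 \<le> \<mu>"
      unfolding f_def quadform_scaleR by (simp add: power_divide)
    then show ?thesis using False
      by (simp add: power2_norm_eq_inner[symmetric] pos_divide_le_eq mult.commute)
  qed (simp add: f_def)
  define M where "M = mat \<mu> - K"
  have "mat \<mu> *v x = \<mu> *\<^sub>R x" for x :: "real^'n"
    by (simp add: vec_eq_iff matrix_vector_mult_def mat_def if_distrib if_distribR sum.delta'
        cong: if_cong)
  then have Mv: "M *v x = \<mu> *\<^sub>R x - K *v x" for x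
    by (simp add: M_def matrix_vector_mult_diff_rdistrib)
  have "transpose M = M" using sym by (simp add: M_def transpose_def vec_eq_iff mat_def)
  moreover have "0 \<le> z \<bullet> (M *v z)" for z
    using bound[of z] by (simp add: Mv f_def inner_diff_right)
  moreover have "u \<bullet> (M *v u) = 0"
    using u by (simp add: Mv \<mu>_def f_def inner_diff_right dot_square_norm)
  ultimately have "M *v u = 0" by (rule quadform_eq_0_imp_kernel)
  then have "\<mu> \<in> matrix_eigenvalues K"
    using u by (auto simp: Mv matrix_eigenvalues_def intro!: exI[of _ u])
  then show ?thesis using bound unfolding f_def by blast
qed

lemma lambda_max_in_eigenvalues:
  fixes K :: "real^'n^'n"
  assumes "transpose K = K"
  shows "lambda_max K \<in> matrix_eigenvalues K"
  using quadform_le_eigenvalue[OF assms] matrix_eigenvalues_finite[OF assms]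
  unfolding lambda_max_def by (intro Max_in) auto

lemma quadform_le_lambda_max:
  fixes K :: "real^'n^'n"
  assumes "transpose K = K"
  shows "x \<bullet> (K *v x) \<le> lambda_max K * (x \<bullet> x)"
proof -
  obtain \<mu> where \<mu>: "\<mu> \<in> matrix_eigenvalues K" "\<And>x. x \<bullet> (K *v x) \<le> \<mu> * (x \<bullet> x)"
    using quadform_le_eigenvalue[OF assms] by blast
  have "\<mu> \<le> lambda_max K"
    unfolding lambda_max_def using matrix_eigenvalues_finite[OF assms] \<mu>(1) by (rule Max_ge)
  then show ?thesis using \<mu>(2)[of x] by (meson inner_ge_zero mult_right_mono order_trans)
qed

lemma lambda_max_pos:
  fixes K :: "real^'n^'n"
  assumes "transpose K = K" and posdef: "\<forall>x. x \<noteq> 0 \<longrightarrow> x \<bullet> (K *v x) > 0"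
  shows "0 < lambda_max K"
proof -
  obtain v where "v \<noteq> 0" and "K *v v = lambda_max K *\<^sub>R v"
    using lambda_max_in_eigenvalues[OF assms(1)] by (auto simp: matrix_eigenvalues_def)
  then have "0 < lambda_max K * (v \<bullet> v)" using posdef by fastforce
  then show ?thesis using inner_ge_zero[of v] by (auto simp: zero_less_mult_iff)
qed

section \<open>Coordinates controlled by the quadratic form\<close>

lemma matrix_inv_right_posdef:
  fixes K :: "real^'n^'n"
  assumes posdef: "\<forall>x. x \<noteq> 0 \<longrightarrow> x \<bullet> (K *v x) > 0"
  shows "K ** matrix_inv K = mat 1"
proof -
  have "\<forall>x. K *v x = 0 \<longrightarrow> x = 0" using posdef by (metis inner_zero_right less_irrefl)
  then have "invertible K"
    using matrix_left_invertible_ker invertible_left_inverse by blast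
  then have "K ** matrix_inv K = mat 1 \<and> matrix_inv K ** K = mat 1"
    unfolding invertible_def matrix_inv_def by (rule someI_ex)
  then show ?thesis by simp
qed

lemma quadform_matrix_inv_axis:
  fixes K :: "real^'n^'n"
  assumes posdef: "\<forall>x. x \<noteq> 0 \<longrightarrow> x \<bullet> (K *v x) > 0"
  shows "K *v (matrix_inv K *v axis j 1) = axis j 1"
    and "(matrix_inv K *v axis j 1) \<bullet> (K *v (matrix_inv K *v axis j 1)) = matrix_inv K $ j $ j"
proof -
  show Kv: "K *v (matrix_inv K *v axis j 1) = axis j 1"
    by (simp add: matrix_vector_mul_assoc matrix_inv_right_posdef[OF posdef])
  show "(matrix_inv K *v axis j 1) \<bullet> (K *v (matrix_inv K *v axis j 1)) = matrix_inv K $ j $ j"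
    unfolding Kv by (simp add: inner_axis matrix_vector_mult_basis column_def)
qed

lemma matrix_inv_diag_pos:
  fixes K :: "real^'n^'n"
  assumes posdef: "\<forall>x. x \<noteq> 0 \<longrightarrow> x \<bullet> (K *v x) > 0"
  shows "0 < matrix_inv K $ j $ j"
proof -
  have "matrix_inv K *v axis j 1 \<noteq> 0"
    using quadform_matrix_inv_axis(1)[OF posdef, of j]
    by (metis axis_eq_0_iff matrix_vector_mult_0_right zero_neq_one)
  then show ?thesis using posdef quadform_matrix_inv_axis(2)[OF posdef] by metis
qed

text \<open>With \<open>v = K\<inverse> e\<^sub>j\<close> one has \<open>x\<^sub>j = v \<bullet> K x\<close> and \<open>v \<bullet> K v = (K\<inverse>)\<^sub>j\<^sub>j\<close>, so this is the
  Cauchy--Schwarz inequality for the form of \<open>K\<close>.\<close>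

lemma component_sq_le_matrix_inv_diag:
  fixes K :: "real^'n^'n"
  assumes sym: "transpose K = K" and posdef: "\<forall>x. x \<noteq> 0 \<longrightarrow> x \<bullet> (K *v x) > 0"
  shows "(x $ j)\<^sup>2 \<le> matrix_inv K $ j $ j * (x \<bullet> (K *v x))"
proof -
  define v where "v = matrix_inv K *v axis j 1"
  have "x $ j = x \<bullet> (K *v v)"
    using quadform_matrix_inv_axis(1)[OF posdef] by (simp add: v_def inner_axis)
  also have "\<dots> = v \<bullet> (K *v x)" by (rule inner_matrix_vector_symmetric[OF sym])
  finally show ?thesis
    using quadform_Cauchy_Schwarz[OF sym posdef_imp_psd[OF posdef], of v x]
      quadform_matrix_inv_axis(2)[OF posdef]
    by (simp add: v_def)
qed

text \<open>The constants \<open>L\<close> and \<open>\<alpha>\<^sub>* = w\<^sub>* / L\<close> of the statement.\<close>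

definition sqrt_max_inv_diag :: "real^'n^'n \<Rightarrow> real" where
  "sqrt_max_inv_diag K = sqrt (Max (range (\<lambda>i. matrix_inv K $ i $ i)))"

definition descent_rate :: "real^'n^'n \<Rightarrow> real^'n \<Rightarrow> real" where
  "descent_rate K p = Min (range (\<lambda>i. p $ i)) / sqrt_max_inv_diag K"

lemma sqrt_max_inv_diag_pos:
  fixes K :: "real^'n^'n"
  assumes posdef: "\<forall>x. x \<noteq> 0 \<longrightarrow> x \<bullet> (K *v x) > 0"
  shows "0 < sqrt_max_inv_diag K"
proof -
  have "matrix_inv K $ j $ j \<le> Max (range (\<lambda>i. matrix_inv K $ i $ i))" for j
    by (rule Max_ge) auto
  then have "0 < Max (range (\<lambda>i. matrix_inv K $ i $ i))"
    using matrix_inv_diag_pos[OF posdef] by (meson less_le_trans)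
  then show ?thesis by (simp add: sqrt_max_inv_diag_def)
qed

lemma abs_component_le_sqrt_quadform:
  fixes K :: "real^'n^'n"
  assumes sym: "transpose K = K" and posdef: "\<forall>x. x \<noteq> 0 \<longrightarrow> x \<bullet> (K *v x) > 0"
  shows "\<bar>x $ j\<bar> \<le> sqrt_max_inv_diag K * sqrt (x \<bullet> (K *v x))"
proof -
  have "0 \<le> x \<bullet> (K *v x)" by (rule posdef_imp_psd[OF posdef])
  moreover have "matrix_inv K $ j $ j \<le> Max (range (\<lambda>i. matrix_inv K $ i $ i))"
    by (rule Max_ge) auto
  ultimately have "(x $ j)\<^sup>2 \<le> Max (range (\<lambda>i. matrix_inv K $ i $ i)) * (x \<bullet> (K *v x))"
    using component_sq_le_matrix_inv_diag[OF sym posdef, of x j]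
    by (meson mult_right_mono order_trans)
  then have "sqrt ((x $ j)\<^sup>2) \<le> sqrt (Max (range (\<lambda>i. matrix_inv K $ i $ i)) * (x \<bullet> (K *v x)))"
    by (rule real_sqrt_le_mono)
  then show ?thesis by (simp add: sqrt_max_inv_diag_def real_sqrt_mult)
qed

lemma simplex_P_component_bounds:
  assumes "x \<in> simplex_P"
  shows "0 \<le> x $ i" and "x $ i \<le> 1"
proof -
  show "0 \<le> x $ i" using assms by (simp add: simplex_P_def)
  have "x $ i \<le> sum (\<lambda>j. x $ j) UNIV"
    by (rule member_le_sum) (use assms in \<open>auto simp: simplex_P_def\<close>)
  then show "x $ i \<le> 1" using assms by (simp add: simplex_P_def)
qed

lemma axis_in_simplex_P: "axis i (1::real) \<in> simplex_P"
  by (simp add: simplex_P_def axis_def)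

lemma simplex_P_segment:
  assumes "x \<in> simplex_P" "y \<in> simplex_P" "0 \<le> t" "t \<le> 1"
  shows "x + t *\<^sub>R (y - x) \<in> simplex_P"
proof -
  have comp: "(x + t *\<^sub>R (y - x)) $ j = (1 - t) * x $ j + t * y $ j" for j
    by (simp add: algebra_simps)
  have "0 \<le> (x + t *\<^sub>R (y - x)) $ j" for j
    unfolding comp
    using assms simplex_P_component_bounds(1)[of x j] simplex_P_component_bounds(1)[of y j]
    by simp
  moreover have "(\<Sum>j\<in>UNIV. (x + t *\<^sub>R (y - x)) $ j) = 1"
    using assms(1,2) unfolding comp
    by (simp add: sum.distrib sum_distrib_left[symmetric] simplex_P_def)
  ultimately show ?thesis by (simp add: simplex_P_def)
qed

lemma sum_scaled_simplex_P_diff: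
  assumes "x \<in> simplex_P" "y \<in> simplex_P"
  shows "(\<Sum>j\<in>UNIV. (c *\<^sub>R (x - y)) $ j) = 0"
  using assms by (simp add: sum_distrib_left[symmetric] sum_subtractf simplex_P_def)

lemma simplex_P_diff_inner_le_2:
  fixes x y :: "real^'n"
  assumes "x \<in> simplex_P" "y \<in> simplex_P"
  shows "(x - y) \<bullet> (x - y) \<le> 2"
proof -
  have "(x - y) \<bullet> (x - y) = (\<Sum>i\<in>UNIV. (x $ i - y $ i)\<^sup>2)"
    by (simp add: inner_vec_def power2_eq_square)
  also have "\<dots> \<le> (\<Sum>i\<in>UNIV. x $ i + y $ i)"
  proof (rule sum_mono)
    fix i
    have "0 \<le> x $ i" "x $ i \<le> 1" "0 \<le> y $ i" "y $ i \<le> 1"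
      using assms simplex_P_component_bounds by auto
    then have "x $ i * x $ i \<le> x $ i" "y $ i * y $ i \<le> y $ i" "0 \<le> x $ i * y $ i"
      by (auto simp: mult_left_le)
    then show "(x $ i - y $ i)\<^sup>2 \<le> x $ i + y $ i" by (simp add: power2_eq_square algebra_simps)
  qed
  also have "\<dots> = 2" using assms by (simp add: sum.distrib simplex_P_def)
  finally show ?thesis .
qed

section \<open>One step of the vertex-direction method\<close>

lemma descent_rate_pos:
  fixes K :: "real^'n^'n"
  assumes posdef: "\<forall>x. x \<noteq> 0 \<longrightarrow> x \<bullet> (K *v x) > 0" and "\<forall>i. p $ i > 0"
  shows "0 < descent_rate K p"
proof -
  have "Min (range (\<lambda>j. p $ j)) \<in> range (\<lambda>j. p $ j)" by (rule Min_in) auto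
  then show ?thesis
    using assms(2) sqrt_max_inv_diag_pos[OF posdef] by (auto simp: descent_rate_def)
qed

lemma inner_axis_minus_weights:
  assumes "(\<Sum>j\<in>UNIV. p $ j) = (1::real)"
  shows "(axis i 1 - p) \<bullet> g = - (\<Sum>j\<in>UNIV. p $ j * (g $ j - g $ i))"
proof -
  have "(\<Sum>j\<in>UNIV. p $ j * (g $ j - g $ i)) = p \<bullet> g - g $ i"
    using assms by (simp add: inner_vec_def algebra_simps sum_subtractf sum_distrib_left[symmetric])
  then show ?thesis by (simp add: inner_diff_left inner_axis')
qed

text \<open>Since the coordinates of \<open>D\<close> sum to zero, \<open>D \<bullet> K D = \<Sum>\<^sub>j D\<^sub>j ((K D)\<^sub>j - (K D)\<^sub>i)\<close>, and
  every \<open>\<bar>D\<^sub>j\<bar>\<close> is at most \<open>L sqrt (D \<bullet> K D)\<close>.\<close>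

lemma sqrt_quadform_le_gap_sum:
  fixes K :: "real^'n^'n"
  assumes sym: "transpose K = K" and posdef: "\<forall>x. x \<noteq> 0 \<longrightarrow> x \<bullet> (K *v x) > 0"
    and sum_D: "(\<Sum>j\<in>UNIV. D $ j) = 0"
    and min_i: "\<forall>j. (K *v D) $ i \<le> (K *v D) $ j"
  shows "sqrt (D \<bullet> (K *v D))
    \<le> sqrt_max_inv_diag K * (\<Sum>j\<in>UNIV. (K *v D) $ j - (K *v D) $ i)"
proof -
  define g where "g = K *v D"
  define L where "L = sqrt_max_inv_diag K"
  define s where "s = (\<Sum>j\<in>UNIV. g $ j - g $ i)"
  define E where "E = D \<bullet> g"
  have gap: "0 \<le> g $ j - g $ i" for j using min_i by (simp add: g_def)
  have "E = (\<Sum>j\<in>UNIV. D $ j * (g $ j - g $ i))"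
    using sum_D
    by (simp add: E_def inner_vec_def algebra_simps sum_subtractf sum_distrib_right[symmetric])
  also have "\<dots> \<le> (\<Sum>j\<in>UNIV. L * sqrt E * (g $ j - g $ i))"
  proof (rule sum_mono)
    fix j
    have "D $ j \<le> L * sqrt E"
      using abs_component_le_sqrt_quadform[OF sym posdef, of D j] by (simp add: L_def E_def g_def)
    then show "D $ j * (g $ j - g $ i) \<le> L * sqrt E * (g $ j - g $ i)"
      using gap by (rule mult_right_mono)
  qed
  also have "\<dots> = sqrt E * (L * s)" unfolding s_def sum_distrib_left by (simp only: ac_simps)
  finally have E_le: "sqrt E * sqrt E \<le> sqrt E * (L * s)"
    using posdef_imp_psd[OF posdef] by (simp add: E_def g_def)
  have "sqrt E \<le> L * s"
  proof (cases "sqrt E = 0")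
    case True
    then show ?thesis
      using sqrt_max_inv_diag_pos[OF posdef] gap by (simp add: L_def s_def sum_nonneg)
  next
    case False
    then have "0 < sqrt E" using posdef_imp_psd[OF posdef, of D] by (simp add: E_def g_def)
    with E_le show ?thesis by (rule mult_le_cancel_left_pos[THEN iffD1, rotated])
  qed
  then show ?thesis by (simp add: E_def g_def L_def s_def)
qed

lemma vertex_descent:
  fixes K :: "real^'n^'n"
  assumes sym: "transpose K = K" and posdef: "\<forall>x. x \<noteq> 0 \<longrightarrow> x \<bullet> (K *v x) > 0"
    and p: "p \<in> simplex_P"
    and sum_D: "(\<Sum>j\<in>UNIV. D $ j) = 0"
    and min_i: "\<forall>j. (K *v D) $ i \<le> (K *v D) $ j"
  shows "(axis i 1 - p) \<bullet> (K *v D) \<le> - descent_rate K p * sqrt (D \<bullet> (K *v D))"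
proof -
  define g where "g = K *v D"
  define w where "w = Min (range (\<lambda>j. p $ j))"
  define L where "L = sqrt_max_inv_diag K"
  define s where "s = (\<Sum>j\<in>UNIV. g $ j - g $ i)"
  have gap: "0 \<le> g $ j - g $ i" for j using min_i by (simp add: g_def)
  have w_le: "w \<le> p $ j" for j unfolding w_def by (rule Min_le) auto
  have "w \<in> range (\<lambda>j. p $ j)" unfolding w_def by (rule Min_in) auto
  then have "0 \<le> w" using simplex_P_component_bounds(1)[OF p] by auto
  have L: "0 < L" using sqrt_max_inv_diag_pos[OF posdef] by (simp add: L_def)
  have "w * s \<le> (\<Sum>j\<in>UNIV. p $ j * (g $ j - g $ i))"
    unfolding s_def sum_distrib_left using w_le gap by (intro sum_mono mult_right_mono)
  moreover have "w / L * sqrt (D \<bullet> g) \<le> w / L * (L * s)"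
    using sqrt_quadform_le_gap_sum[OF sym posdef sum_D min_i] \<open>0 \<le> w\<close> L
    by (intro mult_left_mono) (simp_all add: g_def L_def s_def)
  moreover have "(axis i 1 - p) \<bullet> g = - (\<Sum>j\<in>UNIV. p $ j * (g $ j - g $ i))"
    using p by (intro inner_axis_minus_weights) (simp add: simplex_P_def)
  ultimately show ?thesis using L by (simp add: descent_rate_def g_def w_def L_def)
qed

section \<open>The \<open>O(1/n\<^sup>2)\<close> rate\<close>

text \<open>The bound \<open>2 b + (b / a)\<^sup>2\<close> is invariant: a large \<open>E\<close> (with \<open>a sqrt E \<ge> b\<close>) cannot grow,
  and a small one (with \<open>E < (b / a)\<^sup>2\<close>) grows by at most \<open>2 b\<close>.\<close>

lemma sqrt_descent_bound_step:
  fixes a b E E' :: real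
  assumes "0 < a" "0 \<le> E" "E \<le> 2 * b + (b / a)\<^sup>2" "E' \<le> E - 2 * a * sqrt E + 2 * b"
  shows "E' \<le> 2 * b + (b / a)\<^sup>2"
proof (cases "b \<le> a * sqrt E")
  case True
  then show ?thesis using assms(3,4) by linarith
next
  case False
  then have "sqrt E < b / a" using \<open>0 < a\<close> by (simp add: field_simps)
  then have "(sqrt E)\<^sup>2 < (b / a)\<^sup>2"
    using \<open>0 \<le> E\<close> by (intro power_strict_mono) auto
  then have "E < (b / a)\<^sup>2" using \<open>0 \<le> E\<close> by simp
  moreover have "0 \<le> a * sqrt E" using assms(1,2) by simp
  ultimately show ?thesis using assms(4) by linarith
qed

lemma scaled_vertex_step:
  fixes x e w :: "real^'n"
  shows "(real n + 1) *\<^sub>R (x + (1 / (real n + 1)) *\<^sub>R (e - x) - w) = real n *\<^sub>R (x - w) + (e - w)"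
  by (simp add: algebra_simps)

lemma quadform_simplex_P_diff_le:
  fixes K :: "real^'n^'n"
  assumes sym: "transpose K = K" and posdef: "\<forall>x. x \<noteq> 0 \<longrightarrow> x \<bullet> (K *v x) > 0"
    and "x \<in> simplex_P" "y \<in> simplex_P"
  shows "(x - y) \<bullet> (K *v (x - y)) \<le> 2 * lambda_max K"
proof -
  have "(x - y) \<bullet> (K *v (x - y)) \<le> lambda_max K * ((x - y) \<bullet> (x - y))"
    by (rule quadform_le_lambda_max[OF sym])
  also have "\<dots> \<le> lambda_max K * 2"
    using simplex_P_diff_inner_le_2[OF assms(3,4)] lambda_max_pos[OF sym posdef]
    by (intro mult_left_mono) auto
  finally show ?thesis by simp
qed

lemma vertex_direction_scaled_error:
  fixes K :: "real^'n^'n" and what :: "real^'n" and \<omega> :: "nat \<Rightarrow> real^'n"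
  assumes sym: "transpose K = K"
    and posdef: "\<forall>x. x \<noteq> 0 \<longrightarrow> x \<bullet> (K *v x) > 0"
    and what_simplex: "what \<in> simplex_P"
    and what_interior: "\<forall>i. what $ i > 0"
    and init: "\<omega> 1 \<in> simplex_P"
    and iter: "\<forall>n\<ge>1. \<exists>i. (\<forall>j. (K *v (\<omega> n - what)) $ i \<le> (K *v (\<omega> n - what)) $ j)
                 \<and> \<omega> (Suc n) = \<omega> n + (1 / (real n + 1)) *\<^sub>R (axis i 1 - \<omega> n)"
    and "n \<ge> 1"
  shows "\<omega> n \<in> simplex_P \<and>
    Knorm2 K (real n *\<^sub>R (\<omega> n - what)) \<le> 2 * lambda_max K + (lambda_max K / descent_rate K what)\<^sup>2"
  using \<open>n \<ge> 1\<close>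
proof (induction n rule: nat_induct_at_least)
  case base
  then show ?case
    using init quadform_simplex_P_diff_le[OF sym posdef init what_simplex]
    by (simp add: Knorm2_def add_increasing2)
next
  case (Suc n)
  define D where "D = real n *\<^sub>R (\<omega> n - what)"
  obtain i where min_i: "\<forall>j. (K *v (\<omega> n - what)) $ i \<le> (K *v (\<omega> n - what)) $ j"
    and step: "\<omega> (Suc n) = \<omega> n + (1 / (real n + 1)) *\<^sub>R (axis i 1 - \<omega> n)"
    using iter Suc.hyps by blast
  have "\<omega> (Suc n) \<in> simplex_P"
    unfolding step using Suc.IH axis_in_simplex_P by (intro simplex_P_segment) auto
  have rate: "0 < descent_rate K what" by (rule descent_rate_pos[OF posdef what_interior])
  have "(\<Sum>j\<in>UNIV. D $ j) = 0"
    unfolding D_def using Suc.IH what_simplex by (intro sum_scaled_simplex_P_diff) auto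
  moreover have "\<forall>j. (K *v D) $ i \<le> (K *v D) $ j"
    using min_i by (auto simp: D_def matrix_vector_mult_scaleR intro: mult_left_mono)
  ultimately have descent:
      "(axis i 1 - what) \<bullet> (K *v D) \<le> - descent_rate K what * sqrt (Knorm2 K D)"
    unfolding Knorm2_def by (rule vertex_descent[OF sym posdef what_simplex])
  have "real (Suc n) *\<^sub>R (\<omega> (Suc n) - what) = D + (axis i 1 - what)"
    unfolding step D_def of_nat_Suc add.commute[of 1 "real n"] by (rule scaled_vertex_step)
  then have "Knorm2 K (real (Suc n) *\<^sub>R (\<omega> (Suc n) - what))
      = Knorm2 K D + 2 * ((axis i 1 - what) \<bullet> (K *v D)) + Knorm2 K (axis i 1 - what)"
    unfolding Knorm2_def by (simp only: quadform_add[OF sym])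
  also have "\<dots> \<le> Knorm2 K D - 2 * descent_rate K what * sqrt (Knorm2 K D) + 2 * lambda_max K"
    using descent quadform_simplex_P_diff_le[OF sym posdef axis_in_simplex_P what_simplex, of i]
    unfolding Knorm2_def by linarith
  finally have "Knorm2 K (real (Suc n) *\<^sub>R (\<omega> (Suc n) - what))
      \<le> Knorm2 K D - 2 * descent_rate K what * sqrt (Knorm2 K D) + 2 * lambda_max K" .
  moreover have "0 \<le> Knorm2 K D" unfolding Knorm2_def by (rule posdef_imp_psd[OF posdef])
  moreover have "Knorm2 K D \<le> 2 * lambda_max K + (lambda_max K / descent_rate K what)\<^sup>2"
    using Suc.IH unfolding D_def by blast
  ultimately have "Knorm2 K (real (Suc n) *\<^sub>R (\<omega> (Suc n) - what))
      \<le> 2 * lambda_max K + (lambda_max K / descent_rate K what)\<^sup>2"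
    using sqrt_descent_bound_step[OF rate] by blast
  with \<open>\<omega> (Suc n) \<in> simplex_P\<close> show ?case by blast
qed

lemma rate_constant_le:
  fixes \<Lambda> a :: real and N :: nat
  assumes "0 < a" "0 \<le> \<Lambda>" "2 \<le> N"
  shows "2 * \<Lambda> + (\<Lambda> / a)\<^sup>2
    \<le> 4 * (sqrt (\<Lambda> * (1 - 1 / real N)))\<^sup>2 * (1 + (sqrt (\<Lambda> * (1 - 1 / real N)))\<^sup>2 / a\<^sup>2)"
proof -
  define r where "r = \<Lambda> * (1 - 1 / real N)"
  have "1 / real N \<le> 1 / 2" using assms(3) by (simp add: field_simps)
  then have "\<Lambda> * (1 / real N) \<le> \<Lambda> * (1 / 2)" using assms(2) by (rule mult_left_mono)
  then have "\<Lambda> \<le> 2 * r" unfolding r_def right_diff_distrib by linarith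
  moreover have "0 \<le> r"
    using assms(2) \<open>1 / real N \<le> 1 / 2\<close> unfolding r_def by (intro mult_nonneg_nonneg) auto
  ultimately have "\<Lambda>\<^sup>2 \<le> (2 * r)\<^sup>2" using assms(2) by (intro power_mono)
  then have "(\<Lambda> / a)\<^sup>2 \<le> 4 * r * (r / a\<^sup>2)"
    by (simp add: power_divide divide_right_mono power_mult_distrib power2_eq_square)
  then show ?thesis
    using \<open>\<Lambda> \<le> 2 * r\<close> \<open>0 \<le> r\<close> by (simp add: r_def[symmetric] distrib_left)
qed

theorem lemmaA3:
  fixes K :: "real^'n^'n" and what :: "real^'n" and \<omega> :: "nat \<Rightarrow> real^'n"
  assumes card: "CARD('n) \<ge> 2"
    and sym: "transpose K = K"
    and posdef: "\<forall>x. x \<noteq> 0 \<longrightarrow> x \<bullet> (K *v x) > 0"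
    and what_simplex: "what \<in> simplex_P"
    and what_interior: "\<forall>i. what $ i > 0"
    and init: "\<omega> 1 \<in> simplex_P"
    and iter: "\<forall>n\<ge>1. \<exists>i. (\<forall>j. (K *v (\<omega> n - what)) $ i \<le> (K *v (\<omega> n - what)) $ j)
                 \<and> \<omega> (Suc n) = \<omega> n + (1 / (real n + 1)) *\<^sub>R (axis i 1 - \<omega> n)"
  shows "\<forall>n\<ge>1.
    (let Rs = sqrt (lambda_max K * (1 - 1 / real CARD('n)));
         ws = Min (range (\<lambda>i. what $ i));
         L = sqrt (Max (range (\<lambda>i. matrix_inv K $ i $ i)));
         as = ws / L
     in Knorm2 K (\<omega> n - what) \<le> 4 * Rs\<^sup>2 * (1 + Rs\<^sup>2 / as\<^sup>2) * (1 / (real n)\<^sup>2))"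
proof (intro allI impI)
  fix n :: nat
  assume "n \<ge> 1"
  define C where "C = 2 * lambda_max K + (lambda_max K / descent_rate K what)\<^sup>2"
  have "(real n)\<^sup>2 * Knorm2 K (\<omega> n - what) \<le> C"
    using vertex_direction_scaled_error[OF sym posdef what_simplex what_interior init iter \<open>n \<ge> 1\<close>]
    by (simp add: Knorm2_scaleR C_def)
  then have "Knorm2 K (\<omega> n - what) \<le> C * (1 / (real n)\<^sup>2)"
    using \<open>n \<ge> 1\<close> by (simp add: field_simps)
  also have "C * (1 / (real n)\<^sup>2) \<le> 4 * (sqrt (lambda_max K * (1 - 1 / real CARD('n))))\<^sup>2
      * (1 + (sqrt (lambda_max K * (1 - 1 / real CARD('n))))\<^sup>2 / (descent_rate K what)\<^sup>2)
      * (1 / (real n)\<^sup>2)"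
    unfolding C_def
    using card lambda_max_pos[OF sym posdef] descent_rate_pos[OF posdef what_interior]
    by (intro mult_right_mono rate_constant_le) auto
  finally show "let Rs = sqrt (lambda_max K * (1 - 1 / real CARD('n)));
         ws = Min (range (\<lambda>i. what $ i));
         L = sqrt (Max (range (\<lambda>i. matrix_inv K $ i $ i)));
         as = ws / L
     in Knorm2 K (\<omega> n - what) \<le> 4 * Rs\<^sup>2 * (1 + Rs\<^sup>2 / as\<^sup>2) * (1 / (real n)\<^sup>2)"
    unfolding Let_def descent_rate_def sqrt_max_inv_diag_def .
qed

end
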